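(* Let $A\subseteq2^{\mathbb N}$ be an analytic set containing no eventually constant sequence. Then there is a continuous map $H:2^{\mathbb N}\to[\mathbb N]$ with $H^{-1}(\mathcal L_A)=2^{\mathbb N}\setminus A$ (i.e. $2^{\mathbb N}\setminus A$ is Wadge reducible to $\mathcal L_A$). In particular, if $A$ is $\mathbf\Sigma^1_1$-complete then $\mathcal L_A$ is $\mathbf\Pi^1_1$-complete. Moreover, if $A$ is Borel then $\mathcal L_A$ is Borel.
   Context: Let $\leqslant$ be the lexicographical order on $2^{\mathbb N}$ and $<$ its strict part. For $x\in2^{\mathbb N}$ let $f^+_x=\chi_{\{y:x\leqslant y\}}$ and $f^-_x=\chi_{\{y:x<y\}}$ (functions on $2^{\mathbb N}$). Fix a bijection $h:2^{<\mathbb N}\to\mathbb N$ with $h(s)<h(t)$ whenever $|s|<|t|$, and let $(s_n)_n$ be the enumeration of $2^{<\mathbb N}$ given by $s_n=h^{-1}(n)$. For $s\in2^{<\mathbb N}$ let $x^0_s=s^\frown0^\infty$ and $x^1_s=s^\frown1^\infty$. Define $f_{4n}=f^+_{x^0_{s_n}}$, $f_{4n+1}=f^+_{x^1_{s_n}}$, $f_{4n+2}=f^-_{x^0_{s_n}}$, $f_{4n+3}=f^-_{x^1_{s_n}}$. $[\mathbb N]$ is the set of infinite subsets of $\mathbb N$ (Polish subspace of $2^{\mathbb N}$), and $\mathcal L_A=\{L\in[\mathbb N]:(f_n|_A)_{n\in L}\text{ converges pointwise on }A\}$. A set is $\mathbf\Sigma^1_1$-complete (resp. $\mathbf\Pi^1_1$-complete)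 if it is $\mathbf\Sigma^1_1$ (resp. $\mathbf\Pi^1_1$) and every $\mathbf\Sigma^1_1$ (resp. $\mathbf\Pi^1_1$) subset of a Polish space is Borel reducible to it. *)

theory Defs
  imports "HOL-Analysis.Analysis" "HOL-Library.Infinite_Set"
begin

text \<open>Cantor space is modelled as the type nat \<Rightarrow> bool with the product topology;
  the space [N] of infinite subsets of N is the subspace of characteristic functions
  of infinite sets.\<close>

definition infsets :: "(nat \<Rightarrow> bool) set" where
  "infsets = {L. infinite {n. L n}}"

definition analytic :: "'a::topological_space set \<Rightarrow> bool" where
  "analytic A \<longleftrightarrow> A = {} \<or> (\<exists>f :: (nat \<Rightarrow> nat) \<Rightarrow> 'a. continuous_on UNIV f \<and> range f = A)"

definition sigma11_complete :: "'b::polish_space itself \<Rightarrow> 'a::topological_space set \<Rightarrow> bool" where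
  "sigma11_complete _ A \<longleftrightarrow> analytic A \<and>
     (\<forall>B :: 'b set. analytic B \<longrightarrow>
        (\<exists>f :: 'b \<Rightarrow> 'a. f \<in> borel_measurable borel \<and> f -` A = B))"

definition pi11_complete :: "'b::polish_space itself \<Rightarrow> 'a::topological_space set \<Rightarrow> 'a set \<Rightarrow> bool" where
  "pi11_complete _ S C \<longleftrightarrow> C \<subseteq> S \<and> analytic (S - C) \<and>
     (\<forall>B :: 'b set. analytic (- B) \<longrightarrow>
        (\<exists>f :: 'b \<Rightarrow> 'a. f \<in> borel_measurable borel \<and> (\<forall>y. f y \<in> S) \<and> f -` C = B))"

definition lex_less :: "(nat \<Rightarrow> bool) \<Rightarrow> (nat \<Rightarrow> bool) \<Rightarrow> bool" where
  "lex_less x y \<longleftrightarrow> (\<exists>n. (\<forall>m<n. x m = y m) \<and> \<not> x n \<and> y n)"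

definition lex_le :: "(nat \<Rightarrow> bool) \<Rightarrow> (nat \<Rightarrow> bool) \<Rightarrow> bool" where
  "lex_le x y \<longleftrightarrow> x = y \<or> lex_less x y"

definition fplus :: "(nat \<Rightarrow> bool) \<Rightarrow> (nat \<Rightarrow> bool) \<Rightarrow> real" where
  "fplus x = (\<lambda>y. if lex_le x y then 1 else 0)"

definition fminus :: "(nat \<Rightarrow> bool) \<Rightarrow> (nat \<Rightarrow> bool) \<Rightarrow> real" where
  "fminus x = (\<lambda>y. if lex_less x y then 1 else 0)"

definition xzero :: "bool list \<Rightarrow> nat \<Rightarrow> bool" where
  "xzero s = (\<lambda>n. if n < length s then s ! n else False)"

definition xone :: "bool list \<Rightarrow> nat \<Rightarrow> bool" where
  "xone s = (\<lambda>n. if n < length s then s ! n else True)"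

definition fseq :: "(bool list \<Rightarrow> nat) \<Rightarrow> nat \<Rightarrow> (nat \<Rightarrow> bool) \<Rightarrow> real" where
  "fseq h n = (let s = inv h (n div 4) in
     if n mod 4 = 0 then fplus (xzero s)
     else if n mod 4 = 1 then fplus (xone s)
     else if n mod 4 = 2 then fminus (xzero s)
     else fminus (xone s))"

definition LA :: "(bool list \<Rightarrow> nat) \<Rightarrow> (nat \<Rightarrow> bool) set \<Rightarrow> (nat \<Rightarrow> bool) set" where
  "LA h A = {L \<in> infsets. \<forall>a\<in>A. convergent (\<lambda>k. fseq h (enumerate {n. L n} k) a)}"

definition eventually_constant :: "(nat \<Rightarrow> bool) \<Rightarrow> bool" where
  "eventually_constant x \<longleftrightarrow> (\<exists>N c. \<forall>n\<ge>N. x n = c)"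

end

theory Submission
  imports Defs
begin

text \<open>
  Every f_n is the indicator of a lexicographic ray starting at an eventually constant
  point p_n (its jump point).  Hence at a point a that is not eventually constant,
  f_n(a) = 1 iff p_n < a, and along an infinite L the 0/1-sequence (f_n(a))_{n \<in> L}
  converges iff L does not contain infinitely many n with p_n < a together with
  infinitely many n with a < p_n.  This criterion (lemma LA_eq) is the heart of the proof;
  the three claims of the theorem then follow separately:
  \<^item> Reduction: H(x) consists of the indices of x|k 0^\<infinity> and x|k 1^\<infinity>; these points
    approach x from both sides, and only from one side for every a \<noteq> x.
  \<^item> Analyticity of [N] - L_A: it is the continuous image of Baire space which codes a
    point of A together with two infinite sets placed below and above that point.
  \<^item> Borel measurability: the existential quantifier over A can be replaced by countably
    many conditions plus two Borel functions (the lexicographic infimum and supremum of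
    the relevant rays), so no projection is needed.
\<close>

section \<open>The lexicographic order on Cantor space\<close>

definition first_diff :: "(nat \<Rightarrow> bool) \<Rightarrow> (nat \<Rightarrow> bool) \<Rightarrow> nat" where
  "first_diff x y = (LEAST i. x i \<noteq> y i)"

lemma first_diff:
  assumes "x \<noteq> y"
  shows "\<forall>m<first_diff x y. x m = y m" "x (first_diff x y) \<noteq> y (first_diff x y)"
proof -
  from assms obtain i where "x i \<noteq> y i" by auto
  then show "x (first_diff x y) \<noteq> y (first_diff x y)" unfolding first_diff_def by (rule LeastI)
  show "\<forall>m<first_diff x y. x m = y m" unfolding first_diff_def using not_less_Least by blast
qed

lemma first_diff_unique:
  assumes "\<forall>m<d. x m = y m" "x d \<noteq> y d"
  shows "first_diff x y = d"
proof -
  have "x \<noteq> y" using assms by auto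
  from first_diff[OF this] assms show ?thesis by (metis linorder_neqE_nat)
qed

lemma lex_less_first_diff:
  "lex_less x y \<longleftrightarrow> x \<noteq> y \<and> \<not> x (first_diff x y) \<and> y (first_diff x y)"
proof
  assume "lex_less x y"
  then obtain n where n: "\<forall>m<n. x m = y m" "\<not> x n" "y n" unfolding lex_less_def by auto
  then have "first_diff x y = n" by (intro first_diff_unique) auto
  with n show "x \<noteq> y \<and> \<not> x (first_diff x y) \<and> y (first_diff x y)" by auto
qed (unfold lex_less_def, use first_diff in blast)

lemma lex_less_irrefl: "\<not> lex_less x x"
  unfolding lex_less_def by auto

lemma lex_less_trans:
  assumes "lex_less x y" "lex_less y z"
  shows "lex_less x z"
proof -
  from assms obtain n k where n: "\<forall>m<n. x m = y m" "\<not> x n" "y n"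
    and k: "\<forall>m<k. y m = z m" "\<not> y k" "z k" unfolding lex_less_def by blast
  show ?thesis unfolding lex_less_def
  proof (cases n k rule: linorder_cases)
    case less
    then have "\<forall>m<n. x m = z m" "z n" using n k by auto
    then show "\<exists>n. (\<forall>m<n. x m = z m) \<and> \<not> x n \<and> z n" using n(2) by blast
  next
    case equal
    then show "\<exists>n. (\<forall>m<n. x m = z m) \<and> \<not> x n \<and> z n" using n k by blast
  next
    case greater
    then have "\<forall>m<k. x m = z m" "\<not> x k" using n k by auto
    then show "\<exists>n. (\<forall>m<n. x m = z m) \<and> \<not> x n \<and> z n" using k(3) by blast
  qed
qed

lemma lex_less_asym: "lex_less x y \<Longrightarrow> \<not> lex_less y x"
  using lex_less_trans lex_less_irrefl by blast

lemma lex_less_linear: "x \<noteq> y \<Longrightarrow> lex_less x y \<or> lex_less y x"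
  using first_diff[of x y] unfolding lex_less_def by (metis (full_types))

lemma lex_less_le_trans: "lex_less x y \<Longrightarrow> lex_le y z \<Longrightarrow> lex_less x z"
  unfolding lex_le_def using lex_less_trans by blast

lemma lex_le_less_trans: "lex_le x y \<Longrightarrow> lex_less y z \<Longrightarrow> lex_less x z"
  unfolding lex_le_def using lex_less_trans by blast

lemma lex_less_local:
  assumes "x \<noteq> a" "\<forall>i\<le>first_diff x a. y i = x i"
  shows "lex_less y a \<longleftrightarrow> lex_less x a" "lex_less a y \<longleftrightarrow> lex_less a x"
proof -
  let ?d = "first_diff x a"
  have d: "\<forall>m<?d. x m = a m" "x ?d \<noteq> a ?d" using first_diff[OF assms(1)] by auto
  have yd: "\<forall>m<?d. y m = a m" "y ?d \<noteq> a ?d" "y ?d = x ?d" using d assms(2) by auto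
  have "first_diff y a = ?d" "first_diff a y = ?d" "first_diff a x = ?d"
    using yd d by (auto intro!: first_diff_unique)
  then show "lex_less y a \<longleftrightarrow> lex_less x a" "lex_less a y \<longleftrightarrow> lex_less a x"
    unfolding lex_less_first_diff using yd assms(1) by (auto dest: fun_cong[of y a ?d])
qed

text \<open>Bitwise complementation reverses the order; it lets us derive statements about
  suprema from statements about infima.\<close>
definition compl_seq :: "(nat \<Rightarrow> bool) \<Rightarrow> nat \<Rightarrow> bool" where
  "compl_seq x = (\<lambda>i. \<not> x i)"

lemma compl_seq_compl_seq [simp]: "compl_seq (compl_seq x) = x"
  unfolding compl_seq_def by simp

lemma lex_less_compl_seq [simp]: "lex_less (compl_seq x) (compl_seq y) \<longleftrightarrow> lex_less y x"
  unfolding lex_less_def compl_seq_def by auto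

lemma compl_seq_xone: "compl_seq (xone t) = xzero (map Not t)"
  unfolding compl_seq_def xone_def xzero_def by auto

lemma open_cylinder: "open {b::nat \<Rightarrow> 'a::discrete_topology. \<forall>i<N. b i = a i}"
proof -
  have "{b::nat \<Rightarrow> 'a. \<forall>i<N. b i = a i} = (\<Inter>i\<in>{..<N}. (\<lambda>b. b i) -` {a i})" by auto
  also have "open \<dots>"
    by (intro open_INT finite_lessThan ballI open_vimage[OF _ continuous_on_product_coordinates])
       (simp add: open_discrete)
  finally show ?thesis .
qed

lemma locally_constant_imp_continuous:
  assumes "\<And>x. \<exists>U. open U \<and> x \<in> U \<and> (\<forall>y\<in>U. g y = g x)"
  shows "continuous_on UNIV g"
proof -
  have "open (g -` B)" for B
  proof (subst open_subopen, intro ballI)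
    fix x assume "x \<in> g -` B"
    with assms[of x] show "\<exists>T. open T \<and> x \<in> T \<and> T \<subseteq> g -` B" by blast
  qed
  then show ?thesis by (simp add: continuous_on_open_vimage[OF open_UNIV])
qed

definition init_seg :: "(nat \<Rightarrow> bool) \<Rightarrow> nat \<Rightarrow> bool list" where
  "init_seg x k = map x [0..<k]"

lemma length_init_seg [simp]: "length (init_seg x k) = k"
  unfolding init_seg_def by simp

lemma init_seg_nth [simp]: "i < k \<Longrightarrow> init_seg x k ! i = x i"
  unfolding init_seg_def by simp

lemma init_seg_cong: "\<forall>i<k. y i = x i \<Longrightarrow> init_seg y k = init_seg x k"
  unfolding init_seg_def by auto

lemma inj_init_seg: "inj (init_seg x)"
  by (rule injI) (metis length_init_seg)

lemma xzero_init_seg: "i < k \<Longrightarrow> xzero (init_seg x k) i = x i"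
  and xone_init_seg: "i < k \<Longrightarrow> xone (init_seg x k) i = x i"
  unfolding xzero_def xone_def by auto

lemma eventually_constant_xzero: "eventually_constant (xzero s)"
  and eventually_constant_xone: "eventually_constant (xone s)"
  unfolding eventually_constant_def xzero_def xone_def
  by (intro exI[of _ "length s"] exI[of _ False] exI[of _ True]; simp)+

lemma xone_inj:
  assumes "length s = length t" "xone s = xone t"
  shows "s = t"
proof (rule nth_equalityI)
  fix i assume "i < length s"
  then show "s ! i = t ! i" using fun_cong[OF assms(2), of i] assms(1) by (simp add: xone_def)
qed (rule assms(1))

lemma xzero_init_seg_le: "lex_le (xzero (init_seg x k)) x"
proof (cases "xzero (init_seg x k) = x")
  case False
  let ?y = "xzero (init_seg x k)"
  let ?d = "first_diff ?y x"
  have d: "\<forall>m<?d. ?y m = x m" "?y ?d \<noteq> x ?d" using first_diff[OF False] by auto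
  then have "\<not> ?d < k" using xzero_init_seg[of ?d k x] by auto
  then have "\<not> ?y ?d" by (simp add: xzero_def)
  with d have "lex_less ?y x" unfolding lex_less_def by blast
  then show ?thesis unfolding lex_le_def by blast
qed (simp add: lex_le_def)

lemma xone_init_seg_le: "lex_le x (xone (init_seg x k))"
proof (cases "x = xone (init_seg x k)")
  case False
  let ?y = "xone (init_seg x k)"
  let ?d = "first_diff x ?y"
  have d: "\<forall>m<?d. x m = ?y m" "x ?d \<noteq> ?y ?d" using first_diff[OF False] by auto
  then have "\<not> ?d < k" using xone_init_seg[of ?d k x] by auto
  then have "?y ?d" by (simp add: xone_def)
  with d have "lex_less x ?y" unfolding lex_less_def by blast
  then show ?thesis unfolding lex_le_def by blast
qed (simp add: lex_le_def)

lemma xzero_init_seg_less: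
  assumes "\<not> eventually_constant x"
  shows "lex_less (xzero (init_seg x k)) x"
proof -
  obtain n where "n \<ge> k" "x n" using assms unfolding eventually_constant_def by blast
  then have "xzero (init_seg x k) n \<noteq> x n" by (simp add: xzero_def)
  then have "xzero (init_seg x k) \<noteq> x" by auto
  then show ?thesis using xzero_init_seg_le[of x k] unfolding lex_le_def by auto
qed

lemma xone_init_seg_less:
  assumes "\<not> eventually_constant x"
  shows "lex_less x (xone (init_seg x k))"
proof -
  obtain n where "n \<ge> k" "\<not> x n" using assms unfolding eventually_constant_def by blast
  then have "x n \<noteq> xone (init_seg x k) n" by (simp add: xone_def)
  then have "x \<noteq> xone (init_seg x k)" by auto
  then show ?thesis using xone_init_seg_le[of x k] unfolding lex_le_def by auto
qed

lemma xone_less_xone_imp_less: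
  assumes "length s = k" "lex_less (xone s) (xone (init_seg x k))"
  shows "lex_less (xone s) x"
proof -
  obtain d where d: "\<forall>m<d. xone s m = xone (init_seg x k) m" "\<not> xone s d" "xone (init_seg x k) d"
    using assms(2) unfolding lex_less_def by blast
  have "d < k" using d(2) assms(1) by (cases "d < k") (auto simp: xone_def)
  with d show ?thesis unfolding lex_less_def by (auto simp: xone_init_seg)
qed

lemma convergent_two_valued_iff:
  fixes X :: "nat \<Rightarrow> 'a::t1_space"
  assumes vals: "\<forall>k. X k = c \<or> X k = d" and "c \<noteq> d"
  shows "convergent X \<longleftrightarrow> finite {k. X k = c} \<or> finite {k. X k = d}"
proof
  assume "convergent X"
  then obtain l where l: "X \<longlonglongrightarrow> l" unfolding convergent_def by blast
  have "l = b" if "infinite {k. X k = b}" for b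
  proof (rule ccontr)
    assume "l \<noteq> b"
    then have "\<forall>\<^sub>F k in sequentially. X k \<noteq> b" using tendsto_imp_eventually_ne[OF l] by blast
    then show False using that unfolding cofinite_eq_sequentially[symmetric] eventually_cofinite by simp
  qed
  then show "finite {k. X k = c} \<or> finite {k. X k = d}" using \<open>c \<noteq> d\<close> by blast
next
  assume "finite {k. X k = c} \<or> finite {k. X k = d}"
  moreover have "{k. X k \<noteq> d} \<subseteq> {k. X k = c}" "{k. X k \<noteq> c} \<subseteq> {k. X k = d}" using vals by auto
  ultimately obtain b where "finite {k. X k \<noteq> b}" using finite_subset by blast
  then have "\<forall>\<^sub>F k in sequentially. X k = b"
    unfolding cofinite_eq_sequentially[symmetric] eventually_cofinite by simp
  then show "convergent X" unfolding convergent_def by (blast intro: tendsto_eventually)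
qed

lemma infinite_enumerate_level:
  fixes S :: "nat set"
  assumes S: "infinite S"
  shows "infinite {k. P (enumerate S k)} \<longleftrightarrow> infinite {n\<in>S. P n}"
proof -
  have "{n\<in>S. P n} = enumerate S ` {k. P (enumerate S k)}"
  proof (intro equalityI subsetI)
    fix n assume "n \<in> {n\<in>S. P n}"
    then obtain k where "enumerate S k = n" "P n" using enumerate_Ex[OF S] by blast
    then show "n \<in> enumerate S ` {k. P (enumerate S k)}" by auto
  qed (auto intro: enumerate_in_set[OF S])
  moreover have "inj_on (enumerate S) {k. P (enumerate S k)}"
    using inj_enumerate[OF S] by (rule inj_on_subset) simp
  ultimately show ?thesis by (simp add: finite_image_iff)
qed

section \<open>The functions f_n as indicators of rays\<close>

text \<open>The jump point p_n of f_n: f_n is the indicator of [p_n, \<infinity>) or (p_n, \<infinity>).\<close>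
definition jump_point :: "(bool list \<Rightarrow> nat) \<Rightarrow> nat \<Rightarrow> nat \<Rightarrow> bool" where
  "jump_point h n = (let s = inv h (n div 4) in
     if n mod 4 = 0 \<or> n mod 4 = 2 then xzero s else xone s)"

lemma eventually_constant_jump_point: "eventually_constant (jump_point h n)"
  unfolding jump_point_def Let_def using eventually_constant_xzero eventually_constant_xone by auto

lemma fseq_eq_ne_jump_point:
  assumes "jump_point h n \<noteq> a"
  shows "fseq h n a = (if lex_less (jump_point h n) a then 1 else 0)"
proof -
  have "fseq h n a = (if n mod 4 = 0 \<or> n mod 4 = 1 then fplus (jump_point h n) a
                      else fminus (jump_point h n) a)"
    unfolding fseq_def jump_point_def Let_def by auto
  then show ?thesis using assms by (simp add: fplus_def fminus_def lex_le_def)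
qed

lemma fseq_eq:
  assumes "\<not> eventually_constant a"
  shows "fseq h n a = (if lex_less (jump_point h n) a then 1 else 0)"
  using fseq_eq_ne_jump_point eventually_constant_jump_point assms by metis

lemma not_below_jump_point_iff:
  assumes "\<not> eventually_constant a"
  shows "\<not> lex_less (jump_point h n) a \<longleftrightarrow> lex_less a (jump_point h n)"
proof -
  have "jump_point h n \<noteq> a" using eventually_constant_jump_point assms by metis
  then show ?thesis using lex_less_linear lex_less_asym by blast
qed

lemma jump_point_xzero: "bij h \<Longrightarrow> jump_point h (4 * h s) = xzero s"
  and jump_point_xone: "bij h \<Longrightarrow> jump_point h (Suc (4 * h s)) = xone s"
proof -
  have "Suc (4 * m) div 4 = m" "Suc (4 * m) mod 4 = 1" for m :: nat by presburger+
  then show "bij h \<Longrightarrow> jump_point h (4 * h s) = xzero s"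
    and "bij h \<Longrightarrow> jump_point h (Suc (4 * h s)) = xone s"
    unfolding jump_point_def Let_def by (auto simp: bij_is_inj)
qed

lemma inj_index:
  fixes h :: "bool list \<Rightarrow> nat"
  assumes "bij h"
  shows "inj (\<lambda>k. 4 * h (init_seg x k))" "inj (\<lambda>k. Suc (4 * h (init_seg x k)))"
proof -
  have "inj (\<lambda>k. h (init_seg x k))"
    using inj_compose[OF bij_is_inj[OF assms] inj_init_seg] by (simp add: comp_def)
  then show "inj (\<lambda>k. 4 * h (init_seg x k))" "inj (\<lambda>k. Suc (4 * h (init_seg x k)))"
    by (auto simp: inj_def)
qed

lemma infinite_jump_points_below:
  assumes "bij h" "\<not> eventually_constant a"
  shows "infinite {n. lex_less (jump_point h n) a}"
proof -
  have "range (\<lambda>k. 4 * h (init_seg a k)) \<subseteq> {n. lex_less (jump_point h n) a}"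
    using xzero_init_seg_less[OF assms(2)] jump_point_xzero[OF assms(1)] by auto
  then show ?thesis using inj_index[OF assms(1)] infinite_iff_countable_subset by blast
qed

lemma infinite_jump_points_above:
  assumes "bij h" "\<not> eventually_constant a"
  shows "infinite {n. lex_less a (jump_point h n)}"
proof -
  have "range (\<lambda>k. Suc (4 * h (init_seg a k))) \<subseteq> {n. lex_less a (jump_point h n)}"
    using xone_init_seg_less[OF assms(2)] jump_point_xone[OF assms(1)] by auto
  then show ?thesis using inj_index[OF assms(1)] infinite_iff_countable_subset by blast
qed

section \<open>The convergence criterion\<close>

definition inf_below :: "(bool list \<Rightarrow> nat) \<Rightarrow> (nat \<Rightarrow> bool) \<Rightarrow> (nat \<Rightarrow> bool) \<Rightarrow> bool" where
  "inf_below h L a \<longleftrightarrow> infinite {n. L n \<and> lex_less (jump_point h n) a}"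

definition inf_above :: "(bool list \<Rightarrow> nat) \<Rightarrow> (nat \<Rightarrow> bool) \<Rightarrow> (nat \<Rightarrow> bool) \<Rightarrow> bool" where
  "inf_above h L a \<longleftrightarrow> infinite {n. L n \<and> lex_less a (jump_point h n)}"

lemma inf_below_mono: "inf_below h L a \<Longrightarrow> lex_le a b \<Longrightarrow> inf_below h L b"
  unfolding inf_below_def by (rule infinite_super[rotated]) (auto intro: lex_less_le_trans)

lemma inf_above_mono: "inf_above h L b \<Longrightarrow> lex_le a b \<Longrightarrow> inf_above h L a"
  unfolding inf_above_def by (rule infinite_super[rotated]) (auto intro: lex_le_less_trans)

lemma convergent_iff_not_two_sided:
  assumes L: "L \<in> infsets" and a: "\<not> eventually_constant a"
  shows "convergent (\<lambda>k. fseq h (enumerate {n. L n} k) a) \<longleftrightarrow>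
    \<not> (inf_below h L a \<and> inf_above h L a)"
proof -
  have S: "infinite {n. L n}" using L unfolding infsets_def by simp
  have one: "fseq h n a = 1 \<longleftrightarrow> lex_less (jump_point h n) a" for n
    using fseq_eq[OF a, of h n] by simp
  have zero: "fseq h n a = 0 \<longleftrightarrow> lex_less a (jump_point h n)" for n
    using fseq_eq[OF a, of h n] not_below_jump_point_iff[OF a, of h n] lex_less_asym by auto
  have "convergent (\<lambda>k. fseq h (enumerate {n. L n} k) a) \<longleftrightarrow>
      finite {k. fseq h (enumerate {n. L n} k) a = 1} \<or> finite {k. fseq h (enumerate {n. L n} k) a = 0}"
    by (rule convergent_two_valued_iff) (auto simp: fseq_eq[OF a])
  also have "\<dots> \<longleftrightarrow> finite {n \<in> {n. L n}. fseq h n a = 1} \<or> finite {n \<in> {n. L n}. fseq h n a = 0}"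
    using infinite_enumerate_level[OF S, of "\<lambda>n. fseq h n a = 1"]
      infinite_enumerate_level[OF S, of "\<lambda>n. fseq h n a = 0"] by simp
  also have "\<dots> \<longleftrightarrow> \<not> (inf_below h L a \<and> inf_above h L a)"
    unfolding inf_below_def inf_above_def one zero by simp
  finally show ?thesis .
qed

lemma LA_eq:
  assumes "\<forall>a\<in>A. \<not> eventually_constant a"
  shows "LA h A = {L \<in> infsets. \<not> (\<exists>a\<in>A. inf_below h L a \<and> inf_above h L a)}"
  unfolding LA_def using convergent_iff_not_two_sided assms by blast

section \<open>The continuous reduction\<close>

text \<open>H(x) is the set of indices of the functions with jump points x|k 0^\<infinity> and x|k 1^\<infinity>.\<close>
definition reduction :: "(bool list \<Rightarrow> nat) \<Rightarrow> (nat \<Rightarrow> bool) \<Rightarrow> nat \<Rightarrow> bool" where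
  "reduction h x n \<longleftrightarrow> n mod 4 < 2 \<and> init_seg x (length (inv h (n div 4))) = inv h (n div 4)"

lemma continuous_reduction: "continuous_on UNIV (reduction h)"
proof (intro continuous_on_coordinatewise_then_product locally_constant_imp_continuous)
  fix n x
  let ?N = "length (inv h (n div 4))"
  have "reduction h y n = reduction h x n" if "\<forall>i<?N. y i = x i" for y
    using init_seg_cong[OF that] unfolding reduction_def by simp
  then show "\<exists>U. open U \<and> x \<in> U \<and> (\<forall>y\<in>U. reduction h y n = reduction h x n)"
    using open_cylinder[of ?N x] by blast
qed

lemma reduction_xzero: "bij h \<Longrightarrow> reduction h x (4 * h (init_seg x k))"
  and reduction_xone: "bij h \<Longrightarrow> reduction h x (Suc (4 * h (init_seg x k)))"
proof -
  have "Suc (4 * m) div 4 = m" "Suc (4 * m) mod 4 = 1" for m :: nat by presburger+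
  then show "bij h \<Longrightarrow> reduction h x (4 * h (init_seg x k))"
    and "bij h \<Longrightarrow> reduction h x (Suc (4 * h (init_seg x k)))"
    unfolding reduction_def by (auto simp: bij_is_inj)
qed

lemma reduction_cases:
  assumes "bij h" "reduction h x n"
  obtains k where "n = 4 * h (init_seg x k)" | k where "n = Suc (4 * h (init_seg x k))"
proof -
  let ?s = "inv h (n div 4)"
  have "h ?s = n div 4" using assms(1) by (simp add: bij_is_surj surj_f_inv_f)
  then have "n = 4 * h (init_seg x (length ?s)) + n mod 4" using assms(2) unfolding reduction_def by simp
  moreover have "n mod 4 = 0 \<or> n mod 4 = 1" using assms(2) unfolding reduction_def by linarith
  ultimately show ?thesis using that by fastforce
qed

lemma reduction_infsets:
  assumes "bij h"
  shows "reduction h x \<in> infsets"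
proof -
  have "range (\<lambda>k. 4 * h (init_seg x k)) \<subseteq> {n. reduction h x n}"
    using reduction_xzero[OF assms] by auto
  then show ?thesis unfolding infsets_def using inj_index[OF assms] infinite_iff_countable_subset by blast
qed

lemma reduction_two_sided:
  assumes "bij h" "\<not> eventually_constant x"
  shows "inf_below h (reduction h x) x \<and> inf_above h (reduction h x) x"
proof -
  have "range (\<lambda>k. 4 * h (init_seg x k)) \<subseteq> {n. reduction h x n \<and> lex_less (jump_point h n) x}"
    "range (\<lambda>k. Suc (4 * h (init_seg x k))) \<subseteq> {n. reduction h x n \<and> lex_less x (jump_point h n)}"
    using xzero_init_seg_less[OF assms(2)] xone_init_seg_less[OF assms(2)]
    by (auto simp: jump_point_xzero[OF assms(1)] jump_point_xone[OF assms(1)]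
        reduction_xzero[OF assms(1)] reduction_xone[OF assms(1)])
  then show ?thesis
    unfolding inf_below_def inf_above_def using inj_index[OF assms(1)] infinite_iff_countable_subset by blast
qed

text \<open>\<dots> but at any other point a only from one side: beyond the first difference of x and
  a, both approximants of x lie on the same side of a as x.\<close>
lemma reduction_one_sided:
  assumes "bij h" "a \<noteq> x"
  shows "\<not> (inf_below h (reduction h x) a \<and> inf_above h (reduction h x) a)"
proof -
  have xa: "x \<noteq> a" using assms(2) by simp
  let ?d = "first_diff x a"
  let ?F = "(\<lambda>k. 4 * h (init_seg x k)) ` {..?d} \<union> (\<lambda>k. Suc (4 * h (init_seg x k))) ` {..?d}"
  have side: "(lex_less (jump_point h n) a \<longleftrightarrow> lex_less x a) \<and>
      (lex_less a (jump_point h n) \<longleftrightarrow> lex_less a x)"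
    if red: "reduction h x n" and notF: "n \<notin> ?F" for n
  proof -
    obtain k where k: "n = 4 * h (init_seg x k) \<or> n = Suc (4 * h (init_seg x k))"
      using reduction_cases[OF assms(1) red] by blast
    have "k > ?d"
    proof (rule ccontr)
      assume "\<not> k > ?d"
      then have "n \<in> ?F" using k by auto
      with notF show False by contradiction
    qed
    moreover have "jump_point h n = xzero (init_seg x k) \<or> jump_point h n = xone (init_seg x k)"
      using k by (auto simp: jump_point_xzero[OF assms(1)] jump_point_xone[OF assms(1)])
    ultimately have "\<forall>i\<le>?d. jump_point h n i = x i" by (auto simp: xzero_init_seg xone_init_seg)
    then show ?thesis using lex_less_local[OF xa] by blast
  qed
  have fin: "finite ?F" by simp
  show ?thesis
  proof (cases "lex_less x a")
    case True
    have "\<not> lex_less a (jump_point h n)" if "reduction h x n" "n \<notin> ?F" for n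
      using side[OF that] True lex_less_asym by simp
    then have "{n. reduction h x n \<and> lex_less a (jump_point h n)} \<subseteq> ?F" by blast
    then show ?thesis unfolding inf_above_def using finite_subset fin by blast
  next
    case False
    have "\<not> lex_less (jump_point h n) a" if "reduction h x n" "n \<notin> ?F" for n
      using side[OF that] False by simp
    then have "{n. reduction h x n \<and> lex_less (jump_point h n) a} \<subseteq> ?F" by blast
    then show ?thesis unfolding inf_below_def using finite_subset fin by blast
  qed
qed

theorem reduction_correct:
  assumes "bij h" "\<forall>x\<in>A. \<not> eventually_constant x"
  shows "reduction h -` LA h A = - A"
proof (intro equalityI subsetI)
  fix x assume x: "x \<in> reduction h -` LA h A"
  show "x \<in> - A"
  proof
    assume "x \<in> A"
    then have "inf_below h (reduction h x) x \<and> inf_above h (reduction h x) x"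
      using reduction_two_sided[OF assms(1)] assms(2) by simp
    with \<open>x \<in> A\<close> show False using x unfolding LA_eq[OF assms(2)] by auto
  qed
next
  fix x assume "x \<in> - A"
  then have "a \<noteq> x" if "a \<in> A" for a using that by auto
  then have "\<forall>a\<in>A. \<not> (inf_below h (reduction h x) a \<and> inf_above h (reduction h x) a)"
    using reduction_one_sided[OF assms(1)] by blast
  then show "x \<in> reduction h -` LA h A"
    unfolding LA_eq[OF assms(2)] using reduction_infsets[OF assms(1)] by simp
qed

section \<open>Borel measurability of L_A for Borel A\<close>

text \<open>The lexicographic infimum of an upward closed set P \<subseteq> 2^N, computed bit by bit:
  the n-th bit is that of the least string t of length n+1 with t 1^\<infinity> \<in> P.\<close>
definition lex_inf :: "((nat \<Rightarrow> bool) \<Rightarrow> bool) \<Rightarrow> nat \<Rightarrow> bool" where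
  "lex_inf P n \<longleftrightarrow> (\<exists>t. length t = Suc n \<and> t ! n \<and> P (xone t) \<and>
      (\<forall>t'. length t' = Suc n \<and> lex_less (xone t') (xone t) \<longrightarrow> \<not> P (xone t')))"

definition lex_sup :: "((nat \<Rightarrow> bool) \<Rightarrow> bool) \<Rightarrow> nat \<Rightarrow> bool" where
  "lex_sup P = compl_seq (lex_inf (\<lambda>x. P (compl_seq x)))"

lemma lex_inf_eq:
  assumes up: "\<And>x y. P x \<Longrightarrow> lex_le x y \<Longrightarrow> P y" and Pa: "P a"
    and least: "\<forall>t. P (xone t) \<longrightarrow> \<not> lex_less (xone t) a"
  shows "lex_inf P = a"
proof
  fix n
  let ?t0 = "init_seg a (Suc n)"
  let ?least = "\<lambda>t. length t = Suc n \<and> P (xone t) \<and>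
      (\<forall>t'. length t' = Suc n \<and> lex_less (xone t') (xone t) \<longrightarrow> \<not> P (xone t'))"
  \<comment> \<open>The least string of length n+1 whose 1-extension lies in P is a|(n+1).\<close>
  have P0: "P (xone ?t0)" using up[OF Pa xone_init_seg_le] .
  have below0: "\<not> P (xone t)" if "length t = Suc n" "lex_less (xone t) (xone ?t0)" for t
    using xone_less_xone_imp_less[OF that] least by blast
  have t0: "?least ?t0" using P0 below0 by simp
  have unique: "t = ?t0" if "?least t" for t
  proof (rule ccontr)
    assume "t \<noteq> ?t0"
    then have "xone t \<noteq> xone ?t0" using xone_inj that by force
    then consider "lex_less (xone t) (xone ?t0)" | "lex_less (xone ?t0) (xone t)"
      using lex_less_linear by blast
    then show False
    proof cases
      case 1 then show False using below0 that by blast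
    next
      case 2 then show False using P0 that by simp
    qed
  qed
  have "lex_inf P n \<longleftrightarrow> (\<exists>t. ?least t \<and> t ! n)" unfolding lex_inf_def by blast
  also have "\<dots> \<longleftrightarrow> ?t0 ! n" using t0 unique by blast
  finally show "lex_inf P n = a n" by simp
qed

lemma lex_sup_eq:
  assumes down: "\<And>x y. P y \<Longrightarrow> lex_le x y \<Longrightarrow> P x" and Pa: "P a"
    and greatest: "\<forall>t. P (xzero t) \<longrightarrow> \<not> lex_less a (xzero t)"
  shows "lex_sup P = a"
proof -
  have "lex_inf (\<lambda>x. P (compl_seq x)) = compl_seq a"
  proof (rule lex_inf_eq)
    show "P (compl_seq y)" if "P (compl_seq x)" "lex_le x y" for x y
      using down[OF that(1)] that(2) unfolding lex_le_def by auto
    have "lex_less (xone t) (compl_seq a) \<longleftrightarrow> lex_less a (xzero (map Not t))" for t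
      using lex_less_compl_seq[of "compl_seq a" "xone t"] by (simp add: compl_seq_xone)
    then show "\<forall>t. P (compl_seq (xone t)) \<longrightarrow> \<not> lex_less (xone t) (compl_seq a)"
      using greatest by (simp add: compl_seq_xone)
  qed (simp add: Pa)
  then show ?thesis unfolding lex_sup_def by simp
qed

text \<open>Removing the quantifier over A: a point of A satisfying an upward and a downward
  closed condition either lies strictly between two rational witnesses, or is the
  infimum of the first or the supremum of the second condition.\<close>
lemma exists_between_decompose:
  assumes up: "\<And>x y. P x \<Longrightarrow> lex_le x y \<Longrightarrow> P y" and down: "\<And>x y. Q y \<Longrightarrow> lex_le x y \<Longrightarrow> Q x"
  shows "(\<exists>a\<in>A. P a \<and> Q a) \<longleftrightarrow>
    (\<exists>t t'. (\<exists>a\<in>A. lex_less (xone t) a \<and> lex_less a (xzero t')) \<and> P (xone t) \<and> Q (xzero t'))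
    \<or> (lex_inf P \<in> A \<and> P (lex_inf P) \<and> Q (lex_inf P))
    \<or> (lex_sup Q \<in> A \<and> P (lex_sup Q) \<and> Q (lex_sup Q))" (is "?lhs \<longleftrightarrow> ?rhs")
proof
  assume ?lhs
  then obtain a where a: "a \<in> A" "P a" "Q a" by blast
  consider (inf) "\<forall>t. P (xone t) \<longrightarrow> \<not> lex_less (xone t) a"
    | (sup) "\<forall>t. Q (xzero t) \<longrightarrow> \<not> lex_less a (xzero t)"
    | (between) "\<exists>t t'. lex_less (xone t) a \<and> lex_less a (xzero t') \<and> P (xone t) \<and> Q (xzero t')"
    by blast
  then show ?rhs
  proof cases
    case inf
    have "lex_inf P = a" using up a(2) inf by (rule lex_inf_eq)
    then show ?thesis using a by simp
  next
    case sup
    have "lex_sup Q = a" using down a(3) sup by (rule lex_sup_eq)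
    then show ?thesis using a by simp
  next
    case between then show ?thesis using a(1) by blast
  qed
next
  assume ?rhs
  then show ?lhs using up down unfolding lex_le_def by blast
qed

text \<open>Needed to view 2^N with its product topology as a Borel space coordinatewise.\<close>
instance bool :: second_countable_topology
  by standard (auto intro!: exI[of _ UNIV] ext simp: open_discrete intro: generate_topology.Basis)

lemma measurable_coordinate [measurable]: "Measurable.pred borel (\<lambda>L::nat \<Rightarrow> bool. L n)"
proof -
  have "open {L::nat \<Rightarrow> bool. L n}"
    using open_vimage[OF _ continuous_on_product_coordinates, of "{True}" n] by (simp add: open_discrete vimage_def)
  then show ?thesis unfolding pred_def by simp
qed

lemma measurable_coordinatewise:
  assumes "\<And>n. Measurable.pred borel (\<lambda>L. m L n)"
  shows "(m :: (nat \<Rightarrow> bool) \<Rightarrow> nat \<Rightarrow> bool) \<in> borel_measurable borel"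
proof (rule measurable_coordinatewise_then_product)
  fix n
  have "measurable (borel :: (nat \<Rightarrow> bool) measure) (borel :: bool measure) =
      measurable borel (count_space UNIV)"
    by (rule measurable_cong_sets[OF refl sets_borel_eq_count_space])
  then show "(\<lambda>x. m x n) \<in> borel_measurable borel" using assms[of n] by (simp only:)
qed

lemma lex_less_as_pred:
  "lex_less c y \<longleftrightarrow> (\<exists>d. (\<forall>i<d. (c i \<and> y i) \<or> (\<not> c i \<and> \<not> y i)) \<and> \<not> c d \<and> y d)"
  unfolding lex_less_def by (metis (full_types))

lemma measurable_lex_less:
  assumes [measurable]: "\<And>i. Measurable.pred borel (\<lambda>L. y L i)"
  shows "Measurable.pred borel (\<lambda>L. lex_less c (y L))"
  unfolding lex_less_as_pred by measurable

lemma measurable_lex_greater: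
  assumes [measurable]: "\<And>i. Measurable.pred borel (\<lambda>L. y L i)"
  shows "Measurable.pred borel (\<lambda>L. lex_less (y L) c)"
  unfolding lex_less_as_pred by measurable

lemma measurable_inf_below:
  assumes "\<And>i. Measurable.pred borel (\<lambda>L. y L i)"
  shows "Measurable.pred borel (\<lambda>L. inf_below h L (y L))"
proof -
  have [measurable]: "Measurable.pred borel (\<lambda>L. lex_less (jump_point h n) (y L))" for n
    by (rule measurable_lex_less[OF assms])
  show ?thesis unfolding inf_below_def infinite_nat_iff_unbounded_le mem_Collect_eq by measurable
qed

lemma measurable_inf_above:
  assumes "\<And>i. Measurable.pred borel (\<lambda>L. y L i)"
  shows "Measurable.pred borel (\<lambda>L. inf_above h L (y L))"
proof -
  have [measurable]: "Measurable.pred borel (\<lambda>L. lex_less (y L) (jump_point h n))" for n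
    by (rule measurable_lex_greater[OF assms])
  show ?thesis unfolding inf_above_def infinite_nat_iff_unbounded_le mem_Collect_eq by measurable
qed

lemma measurable_inf_below_const [measurable]: "Measurable.pred borel (\<lambda>L. inf_below h L c)"
  by (rule measurable_inf_below) simp

lemma measurable_inf_above_const [measurable]: "Measurable.pred borel (\<lambda>L. inf_above h L c)"
  by (rule measurable_inf_above) simp

lemma measurable_lex_inf [measurable]: "Measurable.pred borel (\<lambda>L. lex_inf (inf_below h L) n)"
  unfolding lex_inf_def by measurable

lemma measurable_lex_sup [measurable]: "Measurable.pred borel (\<lambda>L. lex_sup (inf_above h L) n)"
  unfolding lex_sup_def compl_seq_def lex_inf_def by measurable

text \<open>The quantifier over A is removed by exists_between_decompose; everything else is
  a countable Boolean combination of coordinate conditions.\<close>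
theorem LA_borel:
  assumes "\<forall>x\<in>A. \<not> eventually_constant x" "A \<in> sets borel"
  shows "LA h A \<in> sets borel"
proof -
  let ?inf = "\<lambda>L. lex_inf (inf_below h L)" and ?sup = "\<lambda>L. lex_sup (inf_above h L)"
  have inf_sup [measurable]: "?inf \<in> borel_measurable borel" "?sup \<in> borel_measurable borel"
    by (auto intro: measurable_coordinatewise)
  have [measurable]: "Measurable.pred borel (\<lambda>L. ?inf L \<in> A)" "Measurable.pred borel (\<lambda>L. ?sup L \<in> A)"
    by (rule pred_sets2[OF assms(2) inf_sup(1)], rule pred_sets2[OF assms(2) inf_sup(2)])
  have [measurable]: "Measurable.pred borel (\<lambda>L. inf_below h L (?inf L))"
    "Measurable.pred borel (\<lambda>L. inf_above h L (?inf L))"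
    "Measurable.pred borel (\<lambda>L. inf_below h L (?sup L))"
    "Measurable.pred borel (\<lambda>L. inf_above h L (?sup L))"
    by (rule measurable_inf_below measurable_inf_above; simp)+
  have decompose: "(\<exists>a\<in>A. inf_below h L a \<and> inf_above h L a) \<longleftrightarrow>
    (\<exists>t t'. (\<exists>a\<in>A. lex_less (xone t) a \<and> lex_less a (xzero t'))
      \<and> inf_below h L (xone t) \<and> inf_above h L (xzero t'))
    \<or> (?inf L \<in> A \<and> inf_below h L (?inf L) \<and> inf_above h L (?inf L))
    \<or> (?sup L \<in> A \<and> inf_below h L (?sup L) \<and> inf_above h L (?sup L))" for L
    by (rule exists_between_decompose) (blast intro: inf_below_mono inf_above_mono)+
  have "LA h A = {L. \<forall>N. \<exists>n\<ge>N. L n} - {L. \<exists>a\<in>A. inf_below h L a \<and> inf_above h L a}"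
    unfolding LA_eq[OF assms(1)] infsets_def infinite_nat_iff_unbounded_le by (simp add: set_diff_eq)
  also have "\<dots> \<in> sets borel" unfolding decompose by measurable
  finally show ?thesis .
qed

section \<open>The complement of L_A in [N] is analytic\<close>

text \<open>Coding infinite subsets of N by points of Baire space: g codes the set of partial
  sums g 0, g 0 + g 1 + 1, \<dots>; membership of n only depends on g up to n.\<close>
primrec partial_sum :: "(nat \<Rightarrow> nat) \<Rightarrow> nat \<Rightarrow> nat" where
  "partial_sum g 0 = g 0"
| "partial_sum g (Suc k) = partial_sum g k + g (Suc k) + 1"

definition coded_set :: "(nat \<Rightarrow> nat) \<Rightarrow> nat \<Rightarrow> bool" where
  "coded_set g n \<longleftrightarrow> (\<exists>k\<le>n. partial_sum g k = n)"

lemma strict_mono_partial_sum: "strict_mono (partial_sum g)"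
  unfolding strict_mono_Suc_iff by simp

lemma coded_set_eq_range: "coded_set g n \<longleftrightarrow> n \<in> range (partial_sum g)"
  unfolding coded_set_def using strict_mono_imp_increasing[OF strict_mono_partial_sum] by auto

lemma infinite_coded_set: "infinite {n. coded_set g n}"
proof -
  have "range (partial_sum g) \<subseteq> {n. coded_set g n}" using coded_set_eq_range by auto
  then show ?thesis
    using strict_mono_imp_inj_on[OF strict_mono_partial_sum] infinite_iff_countable_subset by blast
qed

lemma coded_set_local:
  assumes "\<forall>i\<le>n. g' i = g i"
  shows "coded_set g' n = coded_set g n"
proof -
  have "partial_sum g' k = partial_sum g k" if "k \<le> n" for k
    using that assms by (induction k) auto
  then show ?thesis unfolding coded_set_def by (simp cong: conj_cong)
qed

lemma coded_set_surj:
  assumes S: "infinite {n. X n}"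
  shows "\<exists>g. coded_set g = X"
proof -
  let ?e = "enumerate {n. X n}"
  define g where "g k = (if k = 0 then ?e 0 else ?e k - ?e (k - 1) - 1)" for k
  have "partial_sum g k = ?e k" for k
  proof (induction k)
    case (Suc k)
    then show ?case using enumerate_step[OF S, of k] by (simp add: g_def)
  qed (simp add: g_def)
  then have "coded_set g n \<longleftrightarrow> X n" for n
    unfolding coded_set_eq_range using bij_betw_imp_surj_on[OF bij_enumerate[OF S]] by auto
  then show ?thesis by blast
qed

definition count_below :: "(nat \<Rightarrow> bool) \<Rightarrow> nat \<Rightarrow> nat" where
  "count_below v n = card {m. m < n \<and> v m}"

lemma count_below_le: "count_below v n \<le> n"
  unfolding count_below_def using card_mono[of "{..<n}" "{m. m < n \<and> v m}"] by auto

lemma count_below_local: "\<forall>m<n. v' m = v m \<Longrightarrow> count_below v' n = count_below v n"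
  unfolding count_below_def by (rule arg_cong[where f = card]) auto

lemma count_below_enumerate:
  assumes S: "infinite {m. v m}"
  shows "count_below v (enumerate {m. v m} k) = k"
proof -
  let ?e = "enumerate {m. v m}"
  have "{m. m < ?e k \<and> v m} = ?e ` {..<k}"
  proof (intro equalityI subsetI)
    fix m assume m: "m \<in> {m. m < ?e k \<and> v m}"
    then obtain j where j: "?e j = m" using enumerate_Ex[OF S] by blast
    then have "j < k" using m enumerate_mono_iff[OF S] by auto
    then show "m \<in> ?e ` {..<k}" using j by auto
  next
    fix m assume "m \<in> ?e ` {..<k}"
    then obtain j where "j < k" "m = ?e j" by auto
    then show "m \<in> {m. m < ?e k \<and> v m}" using enumerate_mono[OF _ S] enumerate_in_set[OF S] by auto
  qed
  then show ?thesis
    unfolding count_below_def using card_image[OF inj_on_subset[OF inj_enumerate[OF S]]] by simp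
qed

lemma enumerate_count_below:
  assumes S: "infinite {m. v m}" and "v n"
  shows "enumerate {m. v m} (count_below v n) = n"
proof -
  obtain j where "enumerate {m. v m} j = n" using enumerate_Ex[OF S] assms(2) by blast
  then show ?thesis using count_below_enumerate[OF S, of j] by simp
qed

lemma infinite_enumerate_image:
  fixes S :: "nat set"
  assumes "infinite S" "infinite X"
  shows "infinite (enumerate S ` X)"
proof -
  have "inj_on (enumerate S) X" using inj_enumerate[OF assms(1)] by (rule inj_on_subset) simp
  then show ?thesis using assms(2) by (simp add: finite_image_iff)
qed

text \<open>Given a partition of N into v and its complement, place the set X on v and the set
  Y on the complement (both along their increasing enumerations).\<close>
definition merge_parts :: "(nat \<Rightarrow> bool) \<Rightarrow> (nat \<Rightarrow> bool) \<Rightarrow> (nat \<Rightarrow> bool) \<Rightarrow> nat \<Rightarrow> bool" where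
  "merge_parts v X Y n \<longleftrightarrow> (if v n then X (count_below v n) else Y (count_below (\<lambda>m. \<not> v m) n))"

lemma merge_parts_swap: "merge_parts (\<lambda>m. \<not> v m) Y X = merge_parts v X Y"
  by (rule ext) (simp add: merge_parts_def)

lemma merge_parts_on_part:
  assumes "infinite {m. v m}"
  shows "{n. merge_parts v X Y n \<and> v n} = enumerate {m. v m} ` {k. X k}"
proof (intro equalityI subsetI)
  fix n assume "n \<in> {n. merge_parts v X Y n \<and> v n}"
  then have "v n" "X (count_below v n)" by (auto simp: merge_parts_def)
  then show "n \<in> enumerate {m. v m} ` {k. X k}"
    using enumerate_count_below[OF assms] by (intro image_eqI[of _ _ "count_below v n"]) auto
next
  fix n assume "n \<in> enumerate {m. v m} ` {k. X k}"
  then obtain k where "X k" "n = enumerate {m. v m} k" by auto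
  then show "n \<in> {n. merge_parts v X Y n \<and> v n}"
    using count_below_enumerate[OF assms] enumerate_in_set[OF assms] by (auto simp: merge_parts_def)
qed

lemma merge_parts_decompose:
  assumes "infinite {m. v m}" "infinite {m. \<not> v m}"
  shows "merge_parts v (\<lambda>k. L (enumerate {m. v m} k)) (\<lambda>k. L (enumerate {m. \<not> v m} k)) = L"
proof (rule ext)
  fix n
  show "merge_parts v (\<lambda>k. L (enumerate {m. v m} k)) (\<lambda>k. L (enumerate {m. \<not> v m} k)) n = L n"
    using enumerate_count_below[OF assms(1), of n] enumerate_count_below[OF assms(2), of n]
    by (cases "v n") (simp_all add: merge_parts_def)
qed

text \<open>Membership of n only depends on the data up to n, which gives continuity.\<close>
lemma merge_parts_local:
  assumes "\<forall>m\<le>n. v' m = v m" "\<forall>k\<le>n. X' k = X k" "\<forall>k\<le>n. Y' k = Y k"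
  shows "merge_parts v' X' Y' n = merge_parts v X Y n"
proof -
  have "count_below v' n = count_below v n" "count_below (\<lambda>m. \<not> v' m) n = count_below (\<lambda>m. \<not> v m) n"
    using assms(1) by (auto intro: count_below_local)
  moreover have "count_below v n \<le> n" "count_below (\<lambda>m. \<not> v m) n \<le> n" by (rule count_below_le)+
  ultimately show ?thesis using assms unfolding merge_parts_def by simp
qed

text \<open>Baire space splits into three strands; for a continuous f onto A, the point z codes
  the point a = f(strand 0) of A and two infinite sets, which are placed below and above a.\<close>
definition strand :: "(nat \<Rightarrow> nat) \<Rightarrow> nat \<Rightarrow> nat \<Rightarrow> nat" where
  "strand z j i = z (3 * i + j)"

definition two_sided_set ::
    "(bool list \<Rightarrow> nat) \<Rightarrow> ((nat \<Rightarrow> nat) \<Rightarrow> nat \<Rightarrow> bool) \<Rightarrow> (nat \<Rightarrow> nat) \<Rightarrow> nat \<Rightarrow> bool" where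
  "two_sided_set h f z = merge_parts (\<lambda>n. lex_less (jump_point h n) (f (strand z 0)))
     (coded_set (strand z 1)) (coded_set (strand z 2))"

lemma continuous_strand: "continuous_on UNIV (\<lambda>z. strand z j)"
  unfolding strand_def by (intro continuous_on_coordinatewise_then_product) simp

context
  fixes h :: "bool list \<Rightarrow> nat" and f :: "(nat \<Rightarrow> nat) \<Rightarrow> nat \<Rightarrow> bool"
  assumes bij: "bij h" and not_evc: "\<And>w. \<not> eventually_constant (f w)"
begin

lemma infinite_jump_point_sides:
  "infinite {n. lex_less (jump_point h n) (f w)}" "infinite {n. \<not> lex_less (jump_point h n) (f w)}"
  using infinite_jump_points_below[OF bij not_evc] infinite_jump_points_above[OF bij not_evc]
    not_below_jump_point_iff[OF not_evc] by simp_all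

text \<open>Every coded set accumulates at its point of A from both sides, so it lies outside L_A \<dots>\<close>
lemma two_sided_set_two_sided:
  "two_sided_set h f z \<in> infsets \<and>
     inf_below h (two_sided_set h f z) (f (strand z 0)) \<and> inf_above h (two_sided_set h f z) (f (strand z 0))"
proof -
  let ?a = "f (strand z 0)" and ?L = "two_sided_set h f z"
  let ?v = "\<lambda>n. lex_less (jump_point h n) ?a"
  note v = infinite_jump_point_sides(1)[of "strand z 0"] and nv = infinite_jump_point_sides(2)[of "strand z 0"]
  have "{n. ?L n \<and> ?v n} = enumerate {n. ?v n} ` {k. coded_set (strand z 1) k}"
    unfolding two_sided_set_def by (rule merge_parts_on_part[OF v])
  then have below: "infinite {n. ?L n \<and> ?v n}"
    using infinite_enumerate_image[OF v infinite_coded_set] by simp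
  have "{n. ?L n \<and> \<not> ?v n} = enumerate {n. \<not> ?v n} ` {k. coded_set (strand z 2) k}"
    unfolding two_sided_set_def
    using merge_parts_on_part[OF nv, of "coded_set (strand z 2)" "coded_set (strand z 1)"]
    by (simp only: merge_parts_swap)
  then have above: "infinite {n. ?L n \<and> \<not> ?v n}"
    using infinite_enumerate_image[OF nv infinite_coded_set] by simp
  have "infinite {n. ?L n}" by (rule infinite_super[OF _ below]) auto
  then show ?thesis using below above
    unfolding inf_below_def inf_above_def infsets_def not_below_jump_point_iff[OF not_evc] by simp
qed

lemma two_sided_set_onto:
  assumes "inf_below h L (f w)" "inf_above h L (f w)"
  shows "\<exists>z. two_sided_set h f z = L"
proof -
  let ?v = "\<lambda>n. lex_less (jump_point h n) (f w)"
  note v = infinite_jump_point_sides(1)[of w] and nv = infinite_jump_point_sides(2)[of w]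
  define X where "X k = L (enumerate {n. ?v n} k)" for k
  define Y where "Y k = L (enumerate {n. \<not> ?v n} k)" for k
  have L: "merge_parts ?v X Y = L" unfolding X_def Y_def by (rule merge_parts_decompose[OF v nv])
  have "{n. L n \<and> ?v n} = enumerate {n. ?v n} ` {k. X k}"
    unfolding L[symmetric] by (rule merge_parts_on_part[OF v])
  then have "infinite {k. X k}" using assms(1) finite_imageI unfolding inf_below_def by auto
  then obtain g1 where g1: "coded_set g1 = X" using coded_set_surj by blast
  have "{n. L n \<and> \<not> ?v n} = enumerate {n. \<not> ?v n} ` {k. Y k}"
    using merge_parts_on_part[OF nv, of Y X] unfolding merge_parts_swap L .
  then have "infinite {k. Y k}"
    using assms(2) finite_imageI unfolding inf_above_def not_below_jump_point_iff[OF not_evc] by auto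
  then obtain g2 where g2: "coded_set g2 = Y" using coded_set_surj by blast
  define z where "z i = ([w, g1, g2] ! (i mod 3)) (i div 3)" for i
  have "Suc (3 * i) div 3 = i" "Suc (3 * i) mod 3 = 1"
    "Suc (Suc (3 * i)) div 3 = i" "Suc (Suc (3 * i)) mod 3 = 2" for i :: nat
    by presburger+
  then have "strand z 0 = w" "strand z 1 = g1" "strand z 2 = g2"
    unfolding strand_def z_def by auto
  then have "two_sided_set h f z = merge_parts ?v (coded_set g1) (coded_set g2)"
    unfolding two_sided_set_def by simp
  also have "\<dots> = L" unfolding g1 g2 by (rule L)
  finally show ?thesis by blast
qed

lemma continuous_two_sided_set:
  assumes f: "continuous_on UNIV f"
  shows "continuous_on UNIV (two_sided_set h f)"
proof (intro continuous_on_coordinatewise_then_product locally_constant_imp_continuous)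
  fix n z
  let ?a = "f (strand z 0)"
  let ?d = "\<lambda>m. first_diff ?a (jump_point h m)"
  have ne: "?a \<noteq> jump_point h m" for m using eventually_constant_jump_point not_evc by metis
  have cf: "continuous_on UNIV (\<lambda>z. f (strand z 0))"
    by (rule continuous_on_compose2[OF f continuous_strand]) simp
  \<comment> \<open>Coordinate n only depends on the first 3n+3 entries of z and on the comparisons
    of f(strand z 0) with the jump points p_0, \<dots>, p_n.\<close>
  define W where "W = {z'. \<forall>j<3 * n + 3. z' j = z j}
    \<inter> (\<Inter>m\<in>{..n}. (\<lambda>z. f (strand z 0)) -` {b. \<forall>i<Suc (?d m). b i = ?a i})"
  have "open W" unfolding W_def
    by (intro open_Int open_cylinder open_INT finite_atMost ballI open_vimage[OF open_cylinder cf])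
  moreover have "z \<in> W" unfolding W_def by simp
  moreover have "two_sided_set h f z' n = two_sided_set h f z n" if "z' \<in> W" for z'
  proof -
    have "lex_less (jump_point h m) (f (strand z' 0)) \<longleftrightarrow> lex_less (jump_point h m) ?a"
      if "m \<le> n" for m
    proof -
      have "\<forall>i\<le>?d m. f (strand z' 0) i = ?a i"
            using \<open>z' \<in> W\<close> that unfolding W_def by (auto simp: less_Suc_eq_le)
      then show ?thesis by (rule lex_less_local(2)[OF ne])
    qed
    moreover have "\<forall>k\<le>n. strand z' j k = strand z j k" if "j < 3" for j
      using that \<open>z' \<in> W\<close> unfolding W_def strand_def by auto
    ultimately show ?thesis
      unfolding two_sided_set_def by (intro merge_parts_local) (auto intro!: coded_set_local)
  qed
  ultimately show "\<exists>U. open U \<and> z \<in> U \<and> (\<forall>y\<in>U. two_sided_set h f y n = two_sided_set h f z n)"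
    by blast
qed

end

theorem analytic_complement_LA:
  assumes "bij h" "analytic A" "\<forall>x\<in>A. \<not> eventually_constant x"
  shows "analytic (infsets - LA h A)"
proof (cases "A = {}")
  case True
  then show ?thesis unfolding LA_def analytic_def by auto
next
  case False
  then obtain f :: "(nat \<Rightarrow> nat) \<Rightarrow> nat \<Rightarrow> bool" where f: "continuous_on UNIV f" "range f = A"
    using assms(2) unfolding analytic_def by blast
  have not_evc: "\<And>w. \<not> eventually_constant (f w)" using assms(3) f(2) by auto
  have "range (two_sided_set h f) = infsets - LA h A"
  proof (intro equalityI subsetI)
    fix L assume "L \<in> range (two_sided_set h f)"
    then obtain z where "L = two_sided_set h f z" by blast
    moreover have "f (strand z 0) \<in> A" using f(2) by blast
    ultimately show "L \<in> infsets - LA h A" unfolding LA_eq[OF assms(3)]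
      using two_sided_set_two_sided[where f = f and z = z, OF assms(1) not_evc] by blast
  next
    fix L assume "L \<in> infsets - LA h A"
    then obtain a where "a \<in> A" "inf_below h L a" "inf_above h L a"
      unfolding LA_eq[OF assms(3)] by blast
    moreover obtain w where "a = f w" using \<open>a \<in> A\<close> f(2) by blast
    ultimately show "L \<in> range (two_sided_set h f)"
      using two_sided_set_onto[where f = f, OF assms(1) not_evc] by blast
  qed
  then show ?thesis
    unfolding analytic_def using continuous_two_sided_set[where f = f, OF assms(1) not_evc f(1)] by blast
qed

lemma pi11_complete_by_reduction:
  fixes A :: "'a::topological_space set" and H :: "'a \<Rightarrow> 'c::topological_space"
  assumes A: "sigma11_complete TYPE('b::polish_space) A"
    and H: "continuous_on UNIV H" "\<forall>x. H x \<in> S" "H -` C = - A"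
    and C: "C \<subseteq> S" "analytic (S - C)"
  shows "pi11_complete TYPE('b) S C"
  unfolding pi11_complete_def
proof (intro conjI allI impI C)
  fix B :: "'b set"
  assume "analytic (- B)"
  then obtain g :: "'b \<Rightarrow> 'a" where g: "g \<in> borel_measurable borel" "g -` A = - B"
    using A unfolding sigma11_complete_def by blast
  have "H \<circ> g \<in> borel_measurable borel"
    using measurable_comp[OF g(1) borel_measurable_continuous_onI[OF H(1)]] .
  moreover have "(H \<circ> g) -` C = B" using H(3) g(2) by (auto simp: vimage_comp[symmetric])
  ultimately show "\<exists>f. f \<in> borel_measurable borel \<and> (\<forall>y. f y \<in> S) \<and> f -` C = B"
    using H(2) by (intro exI[of _ "H \<circ> g"]) auto
qed

theorem proposition5p5:
  fixes h :: "bool list \<Rightarrow> nat" and A :: "(nat \<Rightarrow> bool) set"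
  assumes "bij h"
    and "\<And>s t. length s < length t \<Longrightarrow> h s < h t"
    and "analytic A"
    and "\<forall>x\<in>A. \<not> eventually_constant x"
  shows "(\<exists>H :: (nat \<Rightarrow> bool) \<Rightarrow> (nat \<Rightarrow> bool).
            continuous_on UNIV H \<and> (\<forall>x. H x \<in> infsets) \<and> H -` LA h A = - A)
       \<and> (sigma11_complete TYPE('b::polish_space) A \<longrightarrow> pi11_complete TYPE('b) infsets (LA h A))
       \<and> (A \<in> sets borel \<longrightarrow> LA h A \<in> sets borel)"
proof (intro conjI impI)
  have H: "continuous_on UNIV (reduction h)" "\<forall>x. reduction h x \<in> infsets"
    "reduction h -` LA h A = - A"
    using continuous_reduction reduction_infsets[OF assms(1)] reduction_correct[OF assms(1,4)] by auto
  then show "\<exists>H. continuous_on UNIV H \<and> (\<forall>x. H x \<in> infsets) \<and> H -` LA h A = - A"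
    by blast
  have "LA h A \<subseteq> infsets" unfolding LA_def by auto
  then show "pi11_complete TYPE('b) infsets (LA h A)" if "sigma11_complete TYPE('b) A"
    using pi11_complete_by_reduction[OF that H] analytic_complement_LA[OF assms(1,3,4)] by blast
  show "LA h A \<in> sets borel" if "A \<in> sets borel"
    using LA_borel[OF assms(4) that] .
qed

end
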